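(* Let $p\ge0$ be a fixed integer. Let $V:S^1\to\mathbb{R}$ be of class $C^{k-1,1}(S^1)$ with $k\ge 2p+1$, let $\phi(\theta)=e^{-V(\theta)}$, and let $\pi_n$ be the monic degree-$n$ orthogonal polynomial with respect to $\phi$ on the unit circle. Then \[ \lim_{n\to\infty}\frac{1}{n^p}\cdot\frac{\|\pi_n^{(p)}\|_\phi}{\|\pi_n\|_\phi}=1. \]
   Context: $C^{k-1,1}(S^1)$ denotes functions on the circle whose $2\pi$-periodic extension has $k-1$ Lipschitz continuous derivatives. The inner product is $\langle f,g\rangle_\phi=\frac{1}{2\pi}\int_{-\pi}^{\pi}f(e^{i\theta})\overline{g(e^{i\theta})}\phi(\theta)\,d\theta$, $\|f\|_\phi=\langle f,f\rangle_\phi^{1/2}$, and $\pi_n$ is the monic degree-$n$ polynomial orthogonal to all polynomials of lower degree; $\pi_n^{(p)}$ is its $p$-th derivative. *)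

theory Defs
  imports "HOL-Analysis.Analysis" "HOL-Computational_Algebra.Polynomial"
begin

text \<open>A function on the circle is represented by its 2pi-periodic extension to the real line.
  Class C^{k-1,1}: periodic, k-1 times differentiable, with Lipschitz (k-1)-th derivative.\<close>
definition C_lip_periodic :: "nat \<Rightarrow> (real \<Rightarrow> real) \<Rightarrow> bool" where
  "C_lip_periodic k V \<longleftrightarrow>
     (\<forall>\<theta>. V (\<theta> + 2 * pi) = V \<theta>) \<and>
     (\<exists>D :: nat \<Rightarrow> real \<Rightarrow> real. D 0 = V \<and>
        (\<forall>j < k - 1. \<forall>x. (D j has_real_derivative D (Suc j) x) (at x)) \<and>
        (\<exists>L. \<forall>x y. \<bar>D (k - 1) x - D (k - 1) y\<bar> \<le> L * \<bar>x - y\<bar>))"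

definition ip_phi :: "(real \<Rightarrow> real) \<Rightarrow> complex poly \<Rightarrow> complex poly \<Rightarrow> complex" where
  "ip_phi \<phi> f g = integral {-pi..pi}
      (\<lambda>\<theta>. poly f (cis \<theta>) * cnj (poly g (cis \<theta>)) * complex_of_real (\<phi> \<theta>)) / (2 * pi)"

definition norm_phi :: "(real \<Rightarrow> real) \<Rightarrow> complex poly \<Rightarrow> real" where
  "norm_phi \<phi> f = sqrt (Re (ip_phi \<phi> f f))"

definition OPUC :: "(real \<Rightarrow> real) \<Rightarrow> nat \<Rightarrow> complex poly" where
  "OPUC \<phi> n = (THE P. degree P = n \<and> lead_coeff P = 1 \<and>
                      (\<forall>q. degree q < n \<longrightarrow> ip_phi \<phi> P q = 0))"

end

theory Submission
  imports Defs
begin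

text \<open>
  Write \<open>P = \<pi>\<^sub>n\<close> and \<open>\<parallel>\<cdot>\<parallel>\<close> for the norm weighted by \<open>e\<^sup>-\<^sup>V\<close>. The polynomial
  \<open>q = z P' - n P\<close> has degree \<open>< n\<close>, so \<open>\<parallel>q\<parallel>\<^sup>2 = \<langle>z P', q\<rangle>\<close>. On the circle \<open>z d/dz = -\<i> d/d\<theta>\<close>;
  integrating by parts against \<open>e\<^sup>-\<^sup>V\<close> gives \<open>\<langle>z P', q\<rangle> = \<langle>P, z q'\<rangle> - \<i> \<langle>V' P, q\<rangle>\<close>, and
  \<open>\<langle>P, z q'\<rangle> = 0\<close> since \<open>z q'\<close> has degree \<open>< n\<close> as well. Hence \<open>\<parallel>z P' - n P\<parallel> \<le> max \<bar>V'\<bar> \<parallel>P\<parallel>\<close>.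
  Applying \<open>z d/dz - j\<close> repeatedly and controlling \<open>z d/dz\<close> on polynomials of degree \<open>\<le> n\<close>
  by Bernstein's inequality \<open>\<parallel>z f'\<parallel> \<le> C n \<parallel>f\<parallel>\<close>, one gets
  \<open>\<parallel>z\<^sup>p P\<^sup>(\<^sup>p\<^sup>) - n(n-1)\<cdots>(n-p+1) P\<parallel> = O(n\<^sup>p\<^sup>-\<^sup>1) \<parallel>P\<parallel>\<close>; finally \<open>\<bar>z\<^sup>p\<bar> = 1\<close> on the circle.
\<close>

section \<open>The weighted inner product on the circle\<close>

definition ip_integrand :: "(real \<Rightarrow> real) \<Rightarrow> complex poly \<Rightarrow> complex poly \<Rightarrow> real \<Rightarrow> complex" where
  "ip_integrand \<phi> f g \<theta> = poly f (cis \<theta>) * cnj (poly g (cis \<theta>)) * complex_of_real (\<phi> \<theta>)"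

definition sqnorm_phi :: "(real \<Rightarrow> real) \<Rightarrow> complex poly \<Rightarrow> real" where
  "sqnorm_phi \<phi> f = Re (ip_phi \<phi> f f)"

lemma ip_phi_eq_integral: "ip_phi \<phi> f g = integral {-pi..pi} (ip_integrand \<phi> f g) / (2 * pi)"
  unfolding ip_phi_def ip_integrand_def ..

lemma norm_phi_eq_sqrt_sqnorm: "norm_phi \<phi> f = sqrt (sqnorm_phi \<phi> f)"
  unfolding norm_phi_def sqnorm_phi_def ..

lemma integrable_ip_integrand:
  "continuous_on {-pi..pi} \<phi> \<Longrightarrow> ip_integrand \<phi> f g integrable_on {-pi..pi}"
  unfolding ip_integrand_def
  by (intro integrable_continuous_interval continuous_intros continuous_on_of_real)

lemma ip_phi_self_eq_integral:
  assumes "continuous_on {-pi..pi} \<phi>"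
  shows "ip_phi \<phi> f f =
    complex_of_real (integral {-pi..pi} (\<lambda>\<theta>. (cmod (poly f (cis \<theta>)))\<^sup>2 * \<phi> \<theta>) / (2 * pi))"
proof -
  have "ip_integrand \<phi> f f = (\<lambda>\<theta>. complex_of_real ((cmod (poly f (cis \<theta>)))\<^sup>2 * \<phi> \<theta>))"
    unfolding ip_integrand_def fun_eq_iff of_real_mult complex_norm_square[symmetric] by simp
  moreover have "(\<lambda>\<theta>. (cmod (poly f (cis \<theta>)))\<^sup>2 * \<phi> \<theta>) integrable_on {-pi..pi}"
    by (intro integrable_continuous_interval continuous_intros assms)
  ultimately have "integral {-pi..pi} (ip_integrand \<phi> f f) =
      complex_of_real (integral {-pi..pi} (\<lambda>\<theta>. (cmod (poly f (cis \<theta>)))\<^sup>2 * \<phi> \<theta>))"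
    by (metis has_integral_of_real integrable_integral integral_unique)
  then show ?thesis
    unfolding ip_phi_eq_integral by simp
qed

lemma sqnorm_phi_eq_integral:
  "continuous_on {-pi..pi} \<phi> \<Longrightarrow>
    sqnorm_phi \<phi> f = integral {-pi..pi} (\<lambda>\<theta>. (cmod (poly f (cis \<theta>)))\<^sup>2 * \<phi> \<theta>) / (2 * pi)"
  unfolding sqnorm_phi_def by (simp add: ip_phi_self_eq_integral)

lemma sqnorm_phi_mono_weight:
  assumes "continuous_on {-pi..pi} \<phi>" "continuous_on {-pi..pi} \<psi>"
    and "\<And>\<theta>. \<theta> \<in> {-pi..pi} \<Longrightarrow> \<phi> \<theta> \<le> c * \<psi> \<theta>"
  shows "sqnorm_phi \<phi> f \<le> c * sqnorm_phi \<psi> f"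
proof -
  have "integral {-pi..pi} (\<lambda>\<theta>. (cmod (poly f (cis \<theta>)))\<^sup>2 * \<phi> \<theta>)
      \<le> integral {-pi..pi} (\<lambda>\<theta>. c * ((cmod (poly f (cis \<theta>)))\<^sup>2 * \<psi> \<theta>))"
  proof (intro integral_le integrable_continuous_interval continuous_intros assms(1,2))
    fix \<theta> :: real assume "\<theta> \<in> {-pi..pi}"
    from mult_left_mono[OF assms(3)[OF this], of "(cmod (poly f (cis \<theta>)))\<^sup>2"]
    show "(cmod (poly f (cis \<theta>)))\<^sup>2 * \<phi> \<theta> \<le> c * ((cmod (poly f (cis \<theta>)))\<^sup>2 * \<psi> \<theta>)"
      by (simp add: algebra_simps)
  qed
  then show ?thesis
    using assms(1,2) by (simp add: sqnorm_phi_eq_integral divide_right_mono)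
qed

locale circle_weight =
  fixes \<phi> :: "real \<Rightarrow> real"
  assumes continuous_weight: "continuous_on {-pi..pi} \<phi>"
begin

lemma ip_phi_add_left: "ip_phi \<phi> (f + g) h = ip_phi \<phi> f h + ip_phi \<phi> g h"
proof -
  have "ip_integrand \<phi> (f + g) h = (\<lambda>\<theta>. ip_integrand \<phi> f h \<theta> + ip_integrand \<phi> g h \<theta>)"
    by (auto simp: ip_integrand_def algebra_simps fun_eq_iff)
  then show ?thesis
    unfolding ip_phi_eq_integral
    by (simp add: integral_add integrable_ip_integrand[OF continuous_weight] add_divide_distrib)
qed

lemma ip_phi_add_right: "ip_phi \<phi> h (f + g) = ip_phi \<phi> h f + ip_phi \<phi> h g"
proof -
  have "ip_integrand \<phi> h (f + g) = (\<lambda>\<theta>. ip_integrand \<phi> h f \<theta> + ip_integrand \<phi> h g \<theta>)"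
    by (auto simp: ip_integrand_def algebra_simps fun_eq_iff)
  then show ?thesis
    unfolding ip_phi_eq_integral
    by (simp add: integral_add integrable_ip_integrand[OF continuous_weight] add_divide_distrib)
qed

lemma ip_phi_smult_left: "ip_phi \<phi> (smult c f) h = c * ip_phi \<phi> f h"
proof -
  have "ip_integrand \<phi> (smult c f) h = (\<lambda>\<theta>. c * ip_integrand \<phi> f h \<theta>)"
    by (auto simp: ip_integrand_def algebra_simps fun_eq_iff)
  then show ?thesis unfolding ip_phi_eq_integral by simp
qed

lemma ip_phi_smult_right: "ip_phi \<phi> h (smult c f) = cnj c * ip_phi \<phi> h f"
proof -
  have "ip_integrand \<phi> h (smult c f) = (\<lambda>\<theta>. cnj c * ip_integrand \<phi> h f \<theta>)"
    by (auto simp: ip_integrand_def algebra_simps fun_eq_iff)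
  then show ?thesis unfolding ip_phi_eq_integral by simp
qed

lemma ip_phi_cnj: "ip_phi \<phi> g f = cnj (ip_phi \<phi> f g)"
proof -
  have "ip_integrand \<phi> g f = (\<lambda>\<theta>. cnj (ip_integrand \<phi> f g \<theta>))"
    by (auto simp: ip_integrand_def algebra_simps fun_eq_iff)
  then show ?thesis unfolding ip_phi_eq_integral by (simp add: integral_cnj)
qed

lemma ip_phi_0_left [simp]: "ip_phi \<phi> 0 h = 0"
  using ip_phi_smult_left[of 0 0 h] by simp

lemma ip_phi_0_right [simp]: "ip_phi \<phi> h 0 = 0"
  using ip_phi_smult_right[of h 0 0] by simp

lemma ip_phi_diff_left: "ip_phi \<phi> (f - g) h = ip_phi \<phi> f h - ip_phi \<phi> g h"
  using ip_phi_add_left[of f "- g" h] ip_phi_smult_left[of "- 1" g h] by simp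

lemma ip_phi_sum_left: "ip_phi \<phi> (\<Sum>i\<in>A. f i) h = (\<Sum>i\<in>A. ip_phi \<phi> (f i) h)"
  by (induction A rule: infinite_finite_induct) (auto simp: ip_phi_add_left)

lemma ip_phi_sum_right: "ip_phi \<phi> h (\<Sum>i\<in>A. f i) = (\<Sum>i\<in>A. ip_phi \<phi> h (f i))"
  by (induction A rule: infinite_finite_induct) (auto simp: ip_phi_add_right)

lemma ip_phi_self: "ip_phi \<phi> f f = complex_of_real (sqnorm_phi \<phi> f)"
  using ip_phi_self_eq_integral[OF continuous_weight]
  by (simp add: sqnorm_phi_eq_integral[OF continuous_weight])

lemma sqnorm_phi_add:
  "sqnorm_phi \<phi> (f + g) = sqnorm_phi \<phi> f + 2 * Re (ip_phi \<phi> f g) + sqnorm_phi \<phi> g"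
proof -
  have "Re (ip_phi \<phi> g f) = Re (ip_phi \<phi> f g)"
    by (subst ip_phi_cnj) simp
  then show ?thesis
    by (simp add: sqnorm_phi_def ip_phi_add_left ip_phi_add_right)
qed

lemma sqnorm_phi_smult: "sqnorm_phi \<phi> (smult c f) = (cmod c)\<^sup>2 * sqnorm_phi \<phi> f"
proof -
  have "ip_phi \<phi> (smult c f) (smult c f) = (c * cnj c) * ip_phi \<phi> f f"
    by (simp add: ip_phi_smult_left ip_phi_smult_right)
  also have "\<dots> = complex_of_real ((cmod c)\<^sup>2 * sqnorm_phi \<phi> f)"
    by (simp add: complex_norm_square[symmetric] ip_phi_self)
  finally show ?thesis
    unfolding sqnorm_phi_def[of _ "smult c f"] by simp
qed

lemma sqnorm_phi_0 [simp]: "sqnorm_phi \<phi> 0 = 0"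
  by (simp add: sqnorm_phi_def)

lemma norm_phi_smult: "norm_phi \<phi> (smult c f) = cmod c * norm_phi \<phi> f"
  by (simp add: norm_phi_eq_sqrt_sqnorm sqnorm_phi_smult real_sqrt_mult)

lemma norm_phi_uminus: "norm_phi \<phi> (- f) = norm_phi \<phi> f"
  using norm_phi_smult[of "- 1" f] by simp

lemma norm_phi_0 [simp]: "norm_phi \<phi> 0 = 0"
  by (simp add: norm_phi_eq_sqrt_sqnorm)

lemma norm_phi_monom_mult: "norm_phi \<phi> (monom 1 j * f) = norm_phi \<phi> f"
  by (simp add: norm_phi_eq_sqrt_sqnorm sqnorm_phi_eq_integral[OF continuous_weight]
      poly_monom norm_mult norm_power)

end

locale positive_circle_weight = circle_weight +
  assumes weight_pos: "\<And>\<theta>. \<theta> \<in> {-pi..pi} \<Longrightarrow> \<phi> \<theta> > 0"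
begin

lemma sqnorm_phi_nonneg: "sqnorm_phi \<phi> f \<ge> 0"
  unfolding sqnorm_phi_eq_integral[OF continuous_weight]
  by (intro divide_nonneg_pos integral_nonneg integrable_continuous_interval continuous_intros
      continuous_weight) (auto intro!: mult_nonneg_nonneg less_imp_le[OF weight_pos])

lemma sqnorm_phi_pos:
  assumes "f \<noteq> 0"
  shows "sqnorm_phi \<phi> f > 0"
proof (rule ccontr)
  assume "\<not> sqnorm_phi \<phi> f > 0"
  with sqnorm_phi_nonneg[of f] have "sqnorm_phi \<phi> f = 0"
    by linarith
  then have "integral {-pi..pi} (\<lambda>\<theta>. (cmod (poly f (cis \<theta>)))\<^sup>2 * \<phi> \<theta>) = 0"
    by (simp add: sqnorm_phi_eq_integral[OF continuous_weight])
  then have "\<forall>\<theta>\<in>{-pi..pi}. (cmod (poly f (cis \<theta>)))\<^sup>2 * \<phi> \<theta> = 0"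
    by (subst (asm) integral_eq_0_iff)
       (auto intro!: continuous_intros continuous_weight mult_nonneg_nonneg less_imp_le[OF weight_pos])
  moreover have "\<phi> \<theta> > 0" if "\<theta> \<in> {-pi<..pi}" for \<theta>
    using weight_pos that by simp
  ultimately have "cis ` {-pi<..pi} \<subseteq> {z. poly f z = 0}"
    by (fastforce dest: bspec)
  then have "finite (cis ` {-pi<..pi})"
    using poly_roots_finite[OF assms] finite_subset by blast
  moreover have "inj_on cis {-pi<..pi}"
    by (metis Arg_cis inj_onI)
  ultimately have "finite {-pi<..pi}"
    by (rule finite_imageD)
  then show False
    using infinite_Ioc[of "- pi" pi] pi_gt_zero by linarith
qed

lemma sqnorm_phi_eq_0_iff: "sqnorm_phi \<phi> f = 0 \<longleftrightarrow> f = 0"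
  using sqnorm_phi_pos[of f] by fastforce

lemma norm_phi_nonneg: "norm_phi \<phi> f \<ge> 0"
  by (simp add: norm_phi_eq_sqrt_sqnorm sqnorm_phi_nonneg)

lemma norm_phi_pos: "f \<noteq> 0 \<Longrightarrow> norm_phi \<phi> f > 0"
  by (simp add: norm_phi_eq_sqrt_sqnorm sqnorm_phi_pos)

lemma Re_ip_phi_le_norm_phi: "Re (ip_phi \<phi> f g) \<le> norm_phi \<phi> f * norm_phi \<phi> g"
proof (cases "f = 0 \<or> g = 0")
  case True
  then show ?thesis by (auto simp: norm_phi_nonneg)
next
  case False
  define a where "a = norm_phi \<phi> f"
  define b where "b = norm_phi \<phi> g"
  have "a > 0" "b > 0" using False norm_phi_pos unfolding a_def b_def by auto
  have sq: "sqnorm_phi \<phi> f = a\<^sup>2" "sqnorm_phi \<phi> g = b\<^sup>2"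
    using sqnorm_phi_nonneg by (simp_all add: a_def b_def norm_phi_eq_sqrt_sqnorm)
  have "0 \<le> sqnorm_phi \<phi> (smult (complex_of_real b) f + smult (- complex_of_real a) g)"
    by (rule sqnorm_phi_nonneg)
  also have "\<dots> = 2 * a\<^sup>2 * b\<^sup>2 - 2 * a * b * Re (ip_phi \<phi> f g)"
    unfolding sqnorm_phi_add sqnorm_phi_smult sq
    by (simp add: ip_phi_smult_left ip_phi_smult_right power2_eq_square del: smult_minus_left)
  finally show ?thesis
    using \<open>a > 0\<close> \<open>b > 0\<close> by (simp add: a_def b_def power2_eq_square)
qed

lemma norm_phi_triangle: "norm_phi \<phi> (f + g) \<le> norm_phi \<phi> f + norm_phi \<phi> g"
proof -
  have "sqnorm_phi \<phi> (f + g) \<le> (norm_phi \<phi> f + norm_phi \<phi> g)\<^sup>2"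
    using Re_ip_phi_le_norm_phi[of f g] sqnorm_phi_nonneg[of f] sqnorm_phi_nonneg[of g]
    by (simp add: sqnorm_phi_add power2_sum norm_phi_eq_sqrt_sqnorm)
  then have "norm_phi \<phi> (f + g) \<le> sqrt ((norm_phi \<phi> f + norm_phi \<phi> g)\<^sup>2)"
    unfolding norm_phi_eq_sqrt_sqnorm[of _ "f + g"] by (rule real_sqrt_le_mono)
  then show ?thesis
    using norm_phi_nonneg[of f] norm_phi_nonneg[of g] by simp
qed

lemma norm_phi_diff_le: "norm_phi \<phi> (f - g) \<le> norm_phi \<phi> f + norm_phi \<phi> g"
  using norm_phi_triangle[of f "- g"] by (simp add: norm_phi_uminus)

lemma norm_phi_diff_ge: "\<bar>norm_phi \<phi> f - norm_phi \<phi> g\<bar> \<le> norm_phi \<phi> (f - g)"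
  using norm_phi_triangle[of "f - g" g] norm_phi_triangle[of "g - f" f]
    norm_phi_uminus[of "f - g"] by simp

lemma norm_ip_integrand_le:
  assumes "\<theta> \<in> {-pi..pi}" "\<bar>\<psi> \<theta>\<bar> \<le> M * \<phi> \<theta>"
  shows "cmod (ip_integrand \<psi> f g \<theta>)
    \<le> (M\<^sup>2 * ((cmod (poly f (cis \<theta>)))\<^sup>2 * \<phi> \<theta>) + (cmod (poly g (cis \<theta>)))\<^sup>2 * \<phi> \<theta>) / 2"
proof -
  define a where "a = cmod (poly f (cis \<theta>))"
  define b where "b = cmod (poly g (cis \<theta>))"
  have "cmod (ip_integrand \<psi> f g \<theta>) = a * b * \<bar>\<psi> \<theta>\<bar>"
    unfolding ip_integrand_def a_def b_def by (simp add: norm_mult)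
  also have "\<dots> \<le> a * b * (M * \<phi> \<theta>)"
    using assms(2) by (intro mult_left_mono) (auto simp: a_def b_def)
  also have "\<dots> \<le> (M\<^sup>2 * (a\<^sup>2 * \<phi> \<theta>) + b\<^sup>2 * \<phi> \<theta>) / 2"
  proof -
    have "0 \<le> (M * a - b)\<^sup>2 * \<phi> \<theta>"
      using weight_pos[OF assms(1)] by simp
    then show ?thesis
      by (simp add: power2_eq_square algebra_simps)
  qed
  finally show ?thesis
    unfolding a_def b_def .
qed

lemma norm_ip_phi_le_weight:
  assumes "continuous_on {-pi..pi} \<psi>" "\<And>\<theta>. \<theta> \<in> {-pi..pi} \<Longrightarrow> \<bar>\<psi> \<theta>\<bar> \<le> M * \<phi> \<theta>"
  shows "cmod (ip_phi \<psi> f g) \<le> (M\<^sup>2 * sqnorm_phi \<phi> f + sqnorm_phi \<phi> g) / 2"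
proof -
  define F where "F \<theta> = (cmod (poly f (cis \<theta>)))\<^sup>2 * \<phi> \<theta>" for \<theta>
  define G where "G \<theta> = (cmod (poly g (cis \<theta>)))\<^sup>2 * \<phi> \<theta>" for \<theta>
  have F: "F integrable_on {-pi..pi}" and G: "G integrable_on {-pi..pi}"
    unfolding F_def G_def by (intro integrable_continuous_interval continuous_intros continuous_weight)+
  have "cmod (integral {-pi..pi} (ip_integrand \<psi> f g))
      \<le> integral {-pi..pi} (\<lambda>\<theta>. (M\<^sup>2 * F \<theta> + G \<theta>) / 2)"
  proof (rule integral_norm_bound_integral)
    show "(\<lambda>\<theta>. (M\<^sup>2 * F \<theta> + G \<theta>) / 2) integrable_on {-pi..pi}"
      unfolding F_def G_def by (intro integrable_continuous_interval continuous_intros continuous_weight) auto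
  qed (use integrable_ip_integrand[OF assms(1)] norm_ip_integrand_le assms(2) in \<open>auto simp: F_def G_def\<close>)
  also have "\<dots> = (M\<^sup>2 * integral {-pi..pi} F + integral {-pi..pi} G) / 2"
    using F G
    by (intro integral_unique has_integral_divide has_integral_add has_integral_mult_right)
       (auto intro: integrable_integral)
  finally have "cmod (integral {-pi..pi} (ip_integrand \<psi> f g)) / (2 * pi)
      \<le> (M\<^sup>2 * integral {-pi..pi} F + integral {-pi..pi} G) / 2 / (2 * pi)"
    by (intro divide_right_mono) auto
  also have "\<dots> = (M\<^sup>2 * sqnorm_phi \<phi> f + sqnorm_phi \<phi> g) / 2"
    by (simp add: sqnorm_phi_eq_integral[OF continuous_weight] F_def[abs_def] G_def[abs_def] field_simps)
  finally show ?thesis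
    by (simp add: ip_phi_eq_integral norm_divide)
qed

end

section \<open>Monic orthogonal polynomials\<close>

definition is_OPUC :: "(real \<Rightarrow> real) \<Rightarrow> nat \<Rightarrow> complex poly \<Rightarrow> bool" where
  "is_OPUC \<phi> n P \<longleftrightarrow> degree P = n \<and> lead_coeff P = 1 \<and> (\<forall>q. degree q < n \<longrightarrow> ip_phi \<phi> P q = 0)"

lemma eq_0_or_degree_less_if_coeff_eq_0:
  fixes p :: "'a::zero poly"
  assumes "degree p \<le> n" "coeff p n = 0"
  shows "p = 0 \<or> degree p < n"
  using assms by (metis leading_coeff_0_iff le_neq_implies_less)

context positive_circle_weight
begin

lemma is_OPUC_unique:
  assumes "is_OPUC \<phi> n P" "is_OPUC \<phi> n Q"
  shows "P = Q"
proof -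
  have "degree (P - Q) \<le> n" "coeff (P - Q) n = 0"
    using assms degree_diff_le[of P n Q] unfolding is_OPUC_def by auto
  then have "P - Q = 0 \<or> degree (P - Q) < n"
    by (rule eq_0_or_degree_less_if_coeff_eq_0)
  then have "ip_phi \<phi> (P - Q) (P - Q) = 0"
    using assms unfolding is_OPUC_def by (auto simp: ip_phi_diff_left)
  then show ?thesis
    using sqnorm_phi_eq_0_iff[of "P - Q"] by (simp add: sqnorm_phi_def)
qed

lemma orthogonal_if_orthogonal_to_monic_basis:
  assumes B: "\<And>m. m < n \<Longrightarrow> degree (B m) = m \<and> lead_coeff (B m) = 1"
    and P: "\<And>m. m < n \<Longrightarrow> ip_phi \<phi> P (B m) = 0"
    and "degree q < n"
  shows "ip_phi \<phi> P q = 0"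
  using \<open>degree q < n\<close>
proof (induction "degree q" arbitrary: q rule: less_induct)
  case less
  define d where "d = degree q"
  define r where "r = q - smult (lead_coeff q) (B d)"
  have "d < n"
    using less.prems by (simp add: d_def)
  then have "degree (B d) = d \<and> lead_coeff (B d) = 1"
    using B by blast
  then have Bd: "degree (B d) = d" "coeff (B d) d = 1"
    by metis+
  have "degree r \<le> d"
    unfolding r_def using Bd(1) degree_smult_le[of "lead_coeff q" "B d"]
    by (intro degree_diff_le) (auto simp: d_def)
  moreover have "coeff r d = 0"
    using Bd(2) by (simp add: r_def d_def)
  ultimately have "r = 0 \<or> degree r < degree q"
    unfolding d_def by (rule eq_0_or_degree_less_if_coeff_eq_0)
  then have "ip_phi \<phi> P r = 0"
    using less.hyps less.prems by auto
  moreover have "q = smult (lead_coeff q) (B d) + r"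
    by (simp add: r_def)
  ultimately show ?case
    using P[OF \<open>d < n\<close>] by (metis ip_phi_add_right ip_phi_smult_right add_0 mult_zero_right)
qed

lemma ip_phi_is_OPUC_eq_0:
  assumes "is_OPUC \<phi> m P" "is_OPUC \<phi> k Q" "m \<noteq> k"
  shows "ip_phi \<phi> P Q = 0"
proof (cases "k < m")
  case True
  then show ?thesis using assms by (simp add: is_OPUC_def)
next
  case False
  then have "ip_phi \<phi> Q P = 0"
    using assms by (simp add: is_OPUC_def)
  then show ?thesis by (subst ip_phi_cnj) simp
qed

lemma is_OPUC_Gram_Schmidt:
  assumes B: "\<And>m. m < n \<Longrightarrow> is_OPUC \<phi> m (B m)"
  defines "P \<equiv> monom 1 n -
    (\<Sum>m<n. smult (ip_phi \<phi> (monom 1 n) (B m) / complex_of_real (sqnorm_phi \<phi> (B m))) (B m))"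
  shows "is_OPUC \<phi> n P"
proof -
  define c where "c m = ip_phi \<phi> (monom 1 n) (B m) / complex_of_real (sqnorm_phi \<phi> (B m))" for m
  have coeff_P: "coeff P j = (if j = n then 1 else 0)" if "j \<ge> n" for j
  proof -
    have "coeff (B m) j = 0" if "m < n" for m
      using B[OF that] \<open>j \<ge> n\<close> that by (intro coeff_eq_0) (simp add: is_OPUC_def)
    then show ?thesis by (simp add: P_def coeff_sum coeff_monom)
  qed
  have ip_P_B: "ip_phi \<phi> P (B k) = 0" if "k < n" for k
  proof -
    have "B k \<noteq> 0"
      using B[OF that] by (auto simp: is_OPUC_def)
    have "(\<Sum>m<n. c m * ip_phi \<phi> (B m) (B k)) = (\<Sum>m<n. if m = k then c k * ip_phi \<phi> (B k) (B k) else 0)"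
      using ip_phi_is_OPUC_eq_0[OF B B] that by (intro sum.cong) auto
    also have "\<dots> = ip_phi \<phi> (monom 1 n) (B k)"
      using that sqnorm_phi_pos[OF \<open>B k \<noteq> 0\<close>] by (simp add: c_def ip_phi_self)
    finally show ?thesis
      by (simp add: P_def c_def[symmetric] ip_phi_diff_left ip_phi_sum_left ip_phi_smult_left)
  qed
  have "ip_phi \<phi> P q = 0" if "degree q < n" for q
  proof (rule orthogonal_if_orthogonal_to_monic_basis[OF _ ip_P_B that])
    show "degree (B m) = m \<and> lead_coeff (B m) = 1" if "m < n" for m
      using B[OF that] unfolding is_OPUC_def by blast
  qed
  moreover have "degree P = n"
    using coeff_P by (intro antisym degree_le le_degree) auto
  ultimately show ?thesis
    using coeff_P[of n] by (simp add: is_OPUC_def)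
qed

lemma is_OPUC_exists: "\<exists>P. is_OPUC \<phi> n P"
proof (induction n rule: less_induct)
  case (less n)
  then have "is_OPUC \<phi> m (SOME P. is_OPUC \<phi> m P)" if "m < n" for m
    using that by (blast intro: someI_ex)
  then show ?case
    using is_OPUC_Gram_Schmidt[of n "\<lambda>m. SOME P. is_OPUC \<phi> m P"] by blast
qed

lemma is_OPUC_OPUC: "is_OPUC \<phi> n (OPUC \<phi> n)"
proof -
  have "OPUC \<phi> n = (THE P. is_OPUC \<phi> n P)"
    unfolding OPUC_def is_OPUC_def ..
  then show ?thesis
    using theI'[of "is_OPUC \<phi> n"] is_OPUC_exists is_OPUC_unique by metis
qed

lemma degree_OPUC: "degree (OPUC \<phi> n) = n"
  and lead_coeff_OPUC: "lead_coeff (OPUC \<phi> n) = 1"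
  and ip_phi_OPUC_eq_0: "degree q < n \<Longrightarrow> ip_phi \<phi> (OPUC \<phi> n) q = 0"
  using is_OPUC_OPUC[of n] by (auto simp: is_OPUC_def)

lemma OPUC_nonzero: "OPUC \<phi> n \<noteq> 0"
  using lead_coeff_OPUC[of n] by auto

end

section \<open>Parseval's identity and Bernstein's inequality\<close>

lemma has_vector_derivative_cis_mult:
  "((\<lambda>\<theta>. cis (t * \<theta>)) has_vector_derivative (\<i> * complex_of_real t * cis (t * \<theta>))) (at \<theta> within S)"
proof -
  have "((\<lambda>\<theta>. cis (t * \<theta>)) has_derivative (\<lambda>s. (t * s) *\<^sub>R (\<i> * cis (t * \<theta>)))) (at \<theta> within S)"
    by (intro has_derivative_cis derivative_intros)
  then show ?thesis
    unfolding has_vector_derivative_def by (simp add: scaleR_conv_of_real algebra_simps)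
qed

lemma has_integral_cis_int_mult:
  assumes "t \<in> \<int>" "t \<noteq> 0"
  shows "((\<lambda>\<theta>. cis (t * \<theta>)) has_integral 0) {-pi..pi}"
proof -
  define G where "G \<theta> = cis (t * \<theta>) / (\<i> * complex_of_real t)" for \<theta>
  have "(G has_vector_derivative cis (t * \<theta>)) (at \<theta> within {-pi..pi})" for \<theta>
  proof -
    have "(G has_vector_derivative (\<i> * complex_of_real t * cis (t * \<theta>)) / (\<i> * complex_of_real t))
        (at \<theta> within {-pi..pi})"
      unfolding G_def by (intro has_vector_derivative_divide has_vector_derivative_cis_mult)
    then show ?thesis
      using assms(2) by simp
  qed
  then have "((\<lambda>\<theta>. cis (t * \<theta>)) has_integral (G pi - G (-pi))) {-pi..pi}"
    by (intro fundamental_theorem_of_calculus) auto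
  moreover have "cis (t * pi) = cis (- (t * pi)) * cis (2 * pi * t)"
    by (simp add: cis_mult algebra_simps)
  then have "G pi = G (-pi)"
    using assms(1) by (simp add: G_def)
  ultimately show ?thesis
    by simp
qed

interpretation unit_weight: circle_weight "\<lambda>_. 1"
  by unfold_locales simp

lemma ip_phi_1_monom:
  "ip_phi (\<lambda>_. 1) (monom a i) (monom b k) = (if i = k then a * cnj b else 0)"
proof -
  have "ip_integrand (\<lambda>_. 1) (monom a i) (monom b k) =
      (\<lambda>\<theta>. (a * cnj b) * cis ((real i - real k) * \<theta>))"
    by (auto simp: ip_integrand_def fun_eq_iff poly_monom Complex.DeMoivre cis_cnj Complex.cis_mult algebra_simps)
  moreover have "((\<lambda>\<theta>. cis ((real i - real k) * \<theta>)) has_integral 0) {-pi..pi}" if "i \<noteq> k"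
    using that by (intro has_integral_cis_int_mult) auto
  ultimately show ?thesis
    by (auto simp: ip_phi_eq_integral scaleR_conv_of_real integral_unique)
qed

lemma sqnorm_phi_1_eq_sum_coeff:
  assumes "degree f \<le> N"
  shows "sqnorm_phi (\<lambda>_. 1) f = (\<Sum>i\<le>N. (cmod (coeff f i))\<^sup>2)"
proof -
  have "ip_phi (\<lambda>_. 1) f f =
      ip_phi (\<lambda>_. 1) (\<Sum>i\<le>N. monom (coeff f i) i) (\<Sum>k\<le>N. monom (coeff f k) k)"
    using poly_as_sum_of_monoms'[OF assms] by simp
  also have "\<dots> = (\<Sum>i\<le>N. \<Sum>k\<le>N. if i = k then coeff f i * cnj (coeff f k) else 0)"
    by (simp add: unit_weight.ip_phi_sum_left unit_weight.ip_phi_sum_right ip_phi_1_monom)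
  also have "\<dots> = (\<Sum>i\<le>N. coeff f i * cnj (coeff f i))"
    by simp
  also have "\<dots> = (\<Sum>i\<le>N. complex_of_real ((cmod (coeff f i))\<^sup>2))"
    by (simp only: complex_norm_square)
  finally show ?thesis
    by (simp add: sqnorm_phi_def)
qed

text \<open>The Euler operator \<open>z d/dz\<close>: on the circle, \<open>zpderiv f (e\<^sup>i\<^sup>\<theta>) = -\<i> d/d\<theta> f(e\<^sup>i\<^sup>\<theta>)\<close>.\<close>

definition zpderiv :: "complex poly \<Rightarrow> complex poly" where
  "zpderiv f = pCons 0 (pderiv f)"

lemma poly_zpderiv: "poly (zpderiv f) z = z * poly (pderiv f) z"
  by (simp add: zpderiv_def)

lemma coeff_zpderiv: "coeff (zpderiv f) i = of_nat i * coeff f i"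
  by (cases i) (auto simp: zpderiv_def coeff_pderiv)

lemma degree_zpderiv_le: "degree (zpderiv f) \<le> degree f"
  by (rule degree_le) (simp add: coeff_zpderiv coeff_eq_0)

lemma zpderiv_diff: "zpderiv (f - g) = zpderiv f - zpderiv g"
  by (simp add: zpderiv_def pderiv_diff)

lemma zpderiv_smult: "zpderiv (smult c f) = smult c (zpderiv f)"
  by (simp add: zpderiv_def pderiv_smult)

lemma zpderiv_monom_mult:
  "zpderiv (monom 1 j * f) = smult (of_nat j) (monom 1 j * f) + monom 1 (Suc j) * pderiv f"
proof -
  have "poly (zpderiv (monom 1 j * f)) z =
      poly (smult (of_nat j) (monom 1 j * f) + monom 1 (Suc j) * pderiv f) z" for z
    by (cases j) (auto simp: poly_zpderiv pderiv_mult pderiv_monom poly_monom algebra_simps)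
  then show ?thesis
    using poly_eq_poly_eq_iff by blast
qed

lemma monom_mult_higher_pderiv_Suc:
  "monom 1 (Suc j) * (pderiv ^^ Suc j) f =
     zpderiv (monom 1 j * (pderiv ^^ j) f) - smult (of_nat j) (monom 1 j * (pderiv ^^ j) f)"
  using zpderiv_monom_mult[of j "(pderiv ^^ j) f"] by simp

lemma degree_monom_mult_higher_pderiv_le:
  fixes f :: "complex poly"
  shows "degree (monom 1 j * (pderiv ^^ j) f) \<le> degree f"
proof (induction j)
  case (Suc j)
  then show ?case
    unfolding monom_mult_higher_pderiv_Suc
    by (meson degree_diff_le degree_smult_le degree_zpderiv_le order.trans)
qed simp

lemma has_vector_derivative_poly_cis:
  "((\<lambda>\<theta>. poly f (cis \<theta>)) has_vector_derivative (\<i> * poly (zpderiv f) (cis \<theta>))) (at \<theta> within S)"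
proof -
  have "(cis has_vector_derivative (\<i> * cis \<theta>)) (at \<theta> within S)"
    using has_vector_derivative_cis_mult[of 1 \<theta> S] by simp
  from field_vector_diff_chain_within[OF this poly_DERIV[THEN has_field_derivative_at_within]]
  show ?thesis
    by (simp add: o_def poly_zpderiv mult.assoc)
qed

lemma sqnorm_phi_1_zpderiv_le:
  assumes "degree f \<le> N"
  shows "sqnorm_phi (\<lambda>_. 1) (zpderiv f) \<le> (real N)\<^sup>2 * sqnorm_phi (\<lambda>_. 1) f"
proof -
  have "sqnorm_phi (\<lambda>_. 1) (zpderiv f) = (\<Sum>i\<le>N. (real i)\<^sup>2 * (cmod (coeff f i))\<^sup>2)"
    using degree_zpderiv_le[of f] assms
    by (subst sqnorm_phi_1_eq_sum_coeff[of _ N]) (auto simp: coeff_zpderiv norm_mult power_mult_distrib)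
  also have "\<dots> \<le> (\<Sum>i\<le>N. (real N)\<^sup>2 * (cmod (coeff f i))\<^sup>2)"
    by (intro sum_mono mult_right_mono power_mono) auto
  also have "\<dots> = (real N)\<^sup>2 * sqnorm_phi (\<lambda>_. 1) f"
    using sqnorm_phi_1_eq_sum_coeff[OF assms] by (simp add: sum_distrib_left)
  finally show ?thesis .
qed

context positive_circle_weight
begin

text \<open>Bernstein's inequality, transferred from the unit weight since \<open>\<phi>\<close> is bounded above and below.\<close>

lemma norm_phi_zpderiv_le:
  obtains B where "B > 0" "\<And>f N. degree f \<le> N \<Longrightarrow> norm_phi \<phi> (zpderiv f) \<le> B * real N * norm_phi \<phi> f"
proof -
  obtain a where a: "a \<in> {-pi..pi}" "\<And>\<theta>. \<theta> \<in> {-pi..pi} \<Longrightarrow> \<phi> a \<le> \<phi> \<theta>"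
    using continuous_attains_inf[OF compact_Icc _ continuous_weight] by auto
  obtain b where b: "b \<in> {-pi..pi}" "\<And>\<theta>. \<theta> \<in> {-pi..pi} \<Longrightarrow> \<phi> \<theta> \<le> \<phi> b"
    using continuous_attains_sup[OF compact_Icc _ continuous_weight] by auto
  have "\<phi> a > 0" "\<phi> b > 0"
    using a b weight_pos by auto
  have "norm_phi \<phi> (zpderiv f) \<le> sqrt (\<phi> b / \<phi> a) * real N * norm_phi \<phi> f" if "degree f \<le> N" for f N
  proof -
    have "sqnorm_phi \<phi> (zpderiv f) \<le> \<phi> b * sqnorm_phi (\<lambda>_. 1) (zpderiv f)"
      using b by (intro sqnorm_phi_mono_weight continuous_weight) auto
    also have "\<dots> \<le> \<phi> b * ((real N)\<^sup>2 * sqnorm_phi (\<lambda>_. 1) f)"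
      using sqnorm_phi_1_zpderiv_le[OF that] \<open>\<phi> b > 0\<close> by simp
    also have "\<dots> \<le> \<phi> b * ((real N)\<^sup>2 * (1 / \<phi> a * sqnorm_phi \<phi> f))"
      using a \<open>\<phi> a > 0\<close> \<open>\<phi> b > 0\<close>
      by (intro mult_left_mono sqnorm_phi_mono_weight continuous_weight) (auto simp: field_simps)
    also have "\<dots> = (sqrt (\<phi> b / \<phi> a) * real N * norm_phi \<phi> f)\<^sup>2"
      using \<open>\<phi> a > 0\<close> \<open>\<phi> b > 0\<close> sqnorm_phi_nonneg[of f]
      by (simp add: norm_phi_eq_sqrt_sqnorm power_mult_distrib)
    finally show ?thesis
      using \<open>\<phi> a > 0\<close> \<open>\<phi> b > 0\<close> norm_phi_nonneg[of f]
      by (simp add: norm_phi_eq_sqrt_sqnorm[of _ "zpderiv f"] real_sqrt_le_iff real_le_lsqrt)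
  qed
  moreover have "sqrt (\<phi> b / \<phi> a) > 0"
    using \<open>\<phi> a > 0\<close> \<open>\<phi> b > 0\<close> by simp
  ultimately show ?thesis
    using that by blast
qed

end

section \<open>Integration by parts against \<open>e\<^sup>-\<^sup>V\<close>\<close>

lemma integral_by_parts_periodic:
  fixes F G :: "real \<Rightarrow> complex"
  assumes "\<And>\<theta>. (F has_vector_derivative F' \<theta>) (at \<theta>)" "\<And>\<theta>. (G has_vector_derivative G' \<theta>) (at \<theta>)"
    and "(\<lambda>\<theta>. F \<theta> * G' \<theta>) integrable_on {-pi..pi}"
    and "F pi * G pi = F (-pi) * G (-pi)"
  shows "integral {-pi..pi} (\<lambda>\<theta>. F' \<theta> * G \<theta>) = - integral {-pi..pi} (\<lambda>\<theta>. F \<theta> * G' \<theta>)"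
proof -
  have cont: "continuous_on {-pi..pi} F" "continuous_on {-pi..pi} G"
    using assms(1,2) has_vector_derivative_continuous by (blast intro: continuous_at_imp_continuous_on)+
  have "((\<lambda>\<theta>. F \<theta> * G' \<theta>) has_integral
      (F pi * G pi - F (-pi) * G (-pi) - (- integral {-pi..pi} (\<lambda>\<theta>. F \<theta> * G' \<theta>)))) {-pi..pi}"
    using assms(3,4) by (simp add: integrable_integral)
  from integration_by_parts[OF bounded_bilinear_mult _ cont assms(1,2) this]
  show ?thesis
    by (simp add: integral_unique)
qed

locale smooth_potential =
  fixes V V' :: "real \<Rightarrow> real"
  assumes has_real_derivative_potential: "\<And>\<theta>. (V has_real_derivative V' \<theta>) (at \<theta>)"
    and continuous_potential_deriv: "continuous_on {-pi..pi} V'"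
    and potential_periodic: "V (-pi) = V pi"

lemma (in smooth_potential) continuous_potential: "continuous_on S V"
  using has_real_derivative_potential by (meson DERIV_isCont continuous_at_imp_continuous_on)

sublocale smooth_potential \<subseteq> positive_circle_weight "\<lambda>\<theta>. exp (- V \<theta>)"
  by unfold_locales (auto intro!: continuous_intros continuous_potential)

context smooth_potential
begin

text \<open>Integration by parts in \<open>\<theta>\<close>; the derivative falling on the weight \<open>e\<^sup>-\<^sup>V\<close> produces the last term.\<close>

lemma ip_phi_zpderiv_left:
  "\<i> * ip_phi (\<lambda>\<theta>. exp (- V \<theta>)) (zpderiv f) g =
     \<i> * ip_phi (\<lambda>\<theta>. exp (- V \<theta>)) f (zpderiv g) + ip_phi (\<lambda>\<theta>. V' \<theta> * exp (- V \<theta>)) f g"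
proof -
  define w where "w = (\<lambda>\<theta>. exp (- V \<theta>))"
  define \<psi> where "\<psi> = (\<lambda>\<theta>. V' \<theta> * exp (- V \<theta>))"
  define G where "G \<theta> = cnj (poly g (cis \<theta>)) * complex_of_real (w \<theta>)" for \<theta>
  define G' where "G' \<theta> = cnj (poly g (cis \<theta>)) * complex_of_real (- \<psi> \<theta>)
      + cnj (\<i> * poly (zpderiv g) (cis \<theta>)) * complex_of_real (w \<theta>)" for \<theta>
  have cont_w: "continuous_on {-pi..pi} w" and cont_\<psi>: "continuous_on {-pi..pi} \<psi>"
    unfolding w_def \<psi>_def by (intro continuous_intros continuous_potential_deriv continuous_potential)+
  have "(G has_vector_derivative G' \<theta>) (at \<theta>)" for \<theta>
  proof -
    have "((\<lambda>\<theta>. complex_of_real (w \<theta>)) has_vector_derivative complex_of_real (- \<psi> \<theta>)) (at \<theta>)"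
      unfolding w_def \<psi>_def
      by (intro has_vector_derivative_of_real) (auto intro!: derivative_eq_intros has_real_derivative_potential)
    from has_vector_derivative_mult[OF has_vector_derivative_cnj[OF has_vector_derivative_poly_cis[of g]] this]
    show ?thesis
      unfolding G_def[abs_def] G'_def .
  qed
  moreover have "(\<lambda>\<theta>. poly f (cis \<theta>) * G' \<theta>) integrable_on {-pi..pi}"
    unfolding G'_def
    by (intro integrable_continuous_interval continuous_intros continuous_on_of_real cont_w cont_\<psi>)
  moreover have "cis (- pi) = - 1"
    by (simp add: complex_eq_iff)
  then have "poly f (cis pi) * G pi = poly f (cis (-pi)) * G (-pi)"
    using potential_periodic by (simp add: G_def w_def)
  ultimately have "integral {-pi..pi} (\<lambda>\<theta>. \<i> * poly (zpderiv f) (cis \<theta>) * G \<theta>)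
      = - integral {-pi..pi} (\<lambda>\<theta>. poly f (cis \<theta>) * G' \<theta>)"
    by (intro integral_by_parts_periodic has_vector_derivative_poly_cis)
  moreover have "(\<lambda>\<theta>. \<i> * poly (zpderiv f) (cis \<theta>) * G \<theta>) = (\<lambda>\<theta>. \<i> * ip_integrand w (zpderiv f) g \<theta>)"
    by (simp add: fun_eq_iff G_def ip_integrand_def)
  moreover have "(\<lambda>\<theta>. poly f (cis \<theta>) * G' \<theta>) =
      (\<lambda>\<theta>. (- \<i>) * ip_integrand w f (zpderiv g) \<theta> - ip_integrand \<psi> f g \<theta>)"
    by (simp add: fun_eq_iff G'_def ip_integrand_def algebra_simps)
  moreover have "integral {-pi..pi} (\<lambda>\<theta>. (- \<i>) * ip_integrand w f (zpderiv g) \<theta> - ip_integrand \<psi> f g \<theta>) =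
      (- \<i>) * integral {-pi..pi} (ip_integrand w f (zpderiv g)) - integral {-pi..pi} (ip_integrand \<psi> f g)"
    using integrable_ip_integrand[OF cont_w] integrable_ip_integrand[OF cont_\<psi>]
    by (intro integral_unique has_integral_diff has_integral_mult_right integrable_integral)
  ultimately have "\<i> * integral {-pi..pi} (ip_integrand w (zpderiv f) g) =
      \<i> * integral {-pi..pi} (ip_integrand w f (zpderiv g)) + integral {-pi..pi} (ip_integrand \<psi> f g)"
    by simp
  then show ?thesis
    by (simp add: ip_phi_eq_integral w_def \<psi>_def add_divide_distrib)
qed

lemma norm_phi_zpderiv_OPUC_diff_le:
  assumes V'_le: "\<And>\<theta>. \<theta> \<in> {-pi..pi} \<Longrightarrow> \<bar>V' \<theta>\<bar> \<le> M"
  shows "norm_phi (\<lambda>\<theta>. exp (- V \<theta>))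
           (zpderiv (OPUC (\<lambda>\<theta>. exp (- V \<theta>)) n) - smult (of_nat n) (OPUC (\<lambda>\<theta>. exp (- V \<theta>)) n))
         \<le> M * norm_phi (\<lambda>\<theta>. exp (- V \<theta>)) (OPUC (\<lambda>\<theta>. exp (- V \<theta>)) n)"
proof -
  define w where "w = (\<lambda>\<theta>. exp (- V \<theta>))"
  define P where "P = OPUC w n"
  define q where "q = zpderiv P - smult (of_nat n) P"
  have "M \<ge> 0"
    using V'_le[of 0] by simp
  have orth: "ip_phi w P r = 0" if "r = 0 \<or> degree r < n" for r
    using that ip_phi_OPUC_eq_0 by (auto simp: P_def w_def)
  have "degree q \<le> n"
    using degree_zpderiv_le[of P] degree_OPUC[of n]
    by (auto simp: q_def P_def w_def intro!: degree_diff_le order.trans[OF degree_smult_le])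
  moreover have "coeff q n = 0"
    using lead_coeff_OPUC[of n] degree_OPUC[of n] by (simp add: q_def P_def w_def coeff_zpderiv)
  ultimately have q: "q = 0 \<or> degree q < n"
    by (rule eq_0_or_degree_less_if_coeff_eq_0)
  then have "zpderiv q = 0 \<or> degree (zpderiv q) < n"
    using degree_zpderiv_le[of q] by (auto simp: zpderiv_def)
  then have "\<i> * ip_phi w q q = ip_phi (\<lambda>\<theta>. V' \<theta> * exp (- V \<theta>)) P q"
    using ip_phi_zpderiv_left[of P q] orth q
    by (simp add: q_def w_def ip_phi_diff_left ip_phi_smult_left)
  then have "sqnorm_phi w q = cmod (ip_phi (\<lambda>\<theta>. V' \<theta> * exp (- V \<theta>)) P q)"
    using sqnorm_phi_nonneg[of q] by (simp flip: \<open>\<i> * _ = _\<close> add: w_def ip_phi_self norm_mult)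
  also have "\<dots> \<le> (M\<^sup>2 * sqnorm_phi w P + sqnorm_phi w q) / 2"
    unfolding w_def using V'_le
    by (intro norm_ip_phi_le_weight continuous_intros continuous_potential_deriv continuous_potential)
       (auto simp: abs_mult)
  finally have "sqnorm_phi w q \<le> (M * norm_phi w P)\<^sup>2"
    using sqnorm_phi_nonneg[of P] by (simp add: w_def norm_phi_eq_sqrt_sqnorm power_mult_distrib)
  then have "norm_phi w q \<le> sqrt ((M * norm_phi w P)\<^sup>2)"
    unfolding norm_phi_eq_sqrt_sqnorm[of w q] by (rule real_sqrt_le_mono)
  then show ?thesis
    using \<open>M \<ge> 0\<close> norm_phi_nonneg[of P] by (simp add: q_def P_def w_def)
qed

end

section \<open>Higher derivatives\<close>

lemma abs_prod_diff_le:
  assumes "n \<ge> 1"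
  shows "\<bar>\<Prod>i<j. real n - real i\<bar> \<le> ((1 + real j) * real n) ^ j"
proof -
  have "\<bar>real n - real i\<bar> \<le> (1 + real j) * real n" if "i < j" for i
  proof -
    have "real j * 1 \<le> real j * real n"
      using assms by (intro mult_left_mono) auto
    then have "real n + real j \<le> (1 + real j) * real n"
      by (simp add: algebra_simps)
    moreover have "\<bar>real n - real i\<bar> \<le> real n + real j"
      using that by auto
    ultimately show ?thesis
      by linarith
  qed
  then have "(\<Prod>i<j. \<bar>real n - real i\<bar>) \<le> (\<Prod>i<j. (1 + real j) * real n)"
    by (intro prod_mono) auto
  then show ?thesis
    by (simp add: abs_prod)
qed

lemma tendsto_abs_prod_diff_div_power: "(\<lambda>n. \<bar>\<Prod>i<p. real n - real i\<bar> / real n ^ p) \<longlonglongrightarrow> 1"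
proof -
  have "(\<lambda>n. \<bar>\<Prod>i<p. 1 - real i / real n\<bar>) \<longlonglongrightarrow> \<bar>\<Prod>i<p. 1 - 0\<bar>"
    by (intro tendsto_intros tendsto_divide_0[OF tendsto_const]
        filterlim_at_top_imp_at_infinity[OF filterlim_real_sequentially])
  moreover have "\<bar>\<Prod>i<p. 1 - real i / real n\<bar> = \<bar>\<Prod>i<p. real n - real i\<bar> / real n ^ p" if "n \<ge> 1" for n
  proof -
    have "(\<Prod>i<p. 1 - real i / real n) = (\<Prod>i<p. (real n - real i) / real n)"
      using that by (intro prod.cong) (auto simp: field_simps)
    then show ?thesis
      by (simp add: prod_dividef abs_divide)
  qed
  ultimately show ?thesis
    by (auto intro: Lim_transform_eventually[OF _ eventually_sequentiallyI[of 1]])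
qed

context positive_circle_weight
begin

text \<open>The error \<open>r\<^sub>j = z\<^sup>j P\<^sup>(\<^sup>j\<^sup>) - n(n-1)\<cdots>(n-j+1) P\<close> satisfies
  \<open>r\<^sub>j\<^sub>+\<^sub>1 = z r\<^sub>j' - j r\<^sub>j + n(n-1)\<cdots>(n-j+1) (z P' - n P)\<close>, and Bernstein's inequality controls \<open>z r\<^sub>j'\<close>.\<close>

lemma norm_phi_monom_mult_higher_pderiv_diff_Suc_le:
  assumes bernstein: "\<And>f N. degree f \<le> N \<Longrightarrow> norm_phi \<phi> (zpderiv f) \<le> B * real N * norm_phi \<phi> f"
    and "B \<ge> 0" "n \<ge> 1" "degree P \<le> n"
    and approx: "norm_phi \<phi> (zpderiv P - smult (of_nat n) P) \<le> M * norm_phi \<phi> P"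
    and error: "norm_phi \<phi> (monom 1 j * (pderiv ^^ j) P - smult (complex_of_real (\<Prod>i<j. real n - real i)) P)
                  * real n \<le> K * real n ^ j * norm_phi \<phi> P"
  shows "norm_phi \<phi> (monom 1 (Suc j) * (pderiv ^^ Suc j) P
           - smult (complex_of_real (\<Prod>i<Suc j. real n - real i)) P) * real n
         \<le> ((B + real j) * K + (1 + real j) ^ j * M) * real n ^ Suc j * norm_phi \<phi> P"
proof -
  define c where "c = (\<Prod>i<j. real n - real i)"
  define q where "q = zpderiv P - smult (of_nat n) P"
  define r where "r = monom 1 j * (pderiv ^^ j) P - smult (complex_of_real c) P"
  have "degree r \<le> n"
    using \<open>degree P \<le> n\<close> degree_monom_mult_higher_pderiv_le[of j P]
    by (auto simp: r_def intro!: degree_diff_le order.trans[OF degree_smult_le])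
  have "monom 1 (Suc j) * (pderiv ^^ Suc j) P - smult (complex_of_real (\<Prod>i<Suc j. real n - real i)) P
      = zpderiv r - smult (of_nat j) r + smult (complex_of_real c) q"
    unfolding monom_mult_higher_pderiv_Suc r_def q_def c_def
    by (simp add: zpderiv_diff zpderiv_smult smult_diff_right algebra_simps) (simp flip: smult_add_left)
  also have "norm_phi \<phi> \<dots> \<le> norm_phi \<phi> (zpderiv r) + norm_phi \<phi> (smult (of_nat j) r)
      + norm_phi \<phi> (smult (complex_of_real c) q)"
    using norm_phi_triangle norm_phi_diff_le by (meson add_mono order_refl order_trans)
  also have "\<dots> \<le> (B * real n + real j) * norm_phi \<phi> r + \<bar>c\<bar> * norm_phi \<phi> q"
    using bernstein[OF \<open>degree r \<le> n\<close>] by (simp add: norm_phi_smult algebra_simps)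
  also have "\<dots> \<le> (B + real j) * real n * norm_phi \<phi> r + ((1 + real j) * real n) ^ j * (M * norm_phi \<phi> P)"
    using mult_left_mono[of 1 "real n" "real j"] \<open>n \<ge> 1\<close> abs_prod_diff_le[OF \<open>n \<ge> 1\<close>, of j] approx
      norm_phi_nonneg[of r] norm_phi_nonneg[of q]
    by (intro add_mono mult_right_mono mult_mono) (auto simp: c_def q_def algebra_simps)
  finally have "norm_phi \<phi> (monom 1 (Suc j) * (pderiv ^^ Suc j) P
      - smult (complex_of_real (\<Prod>i<Suc j. real n - real i)) P) * real n
    \<le> ((B + real j) * real n * norm_phi \<phi> r + ((1 + real j) * real n) ^ j * (M * norm_phi \<phi> P)) * real n"
    by (rule mult_right_mono) simp
  also have "\<dots> = (B + real j) * real n * (norm_phi \<phi> r * real n)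
      + (1 + real j) ^ j * M * real n ^ Suc j * norm_phi \<phi> P"
    unfolding power_mult_distrib by (simp add: algebra_simps)
  also have "\<dots> \<le> (B + real j) * real n * (K * real n ^ j * norm_phi \<phi> P)
      + (1 + real j) ^ j * M * real n ^ Suc j * norm_phi \<phi> P"
    using error \<open>B \<ge> 0\<close> by (intro add_mono[OF mult_left_mono order_refl]) (auto simp: r_def c_def)
  also have "\<dots> = ((B + real j) * K + (1 + real j) ^ j * M) * real n ^ Suc j * norm_phi \<phi> P"
    by (simp add: algebra_simps)
  finally show ?thesis .
qed

lemma norm_phi_monom_mult_higher_pderiv_diff_le:
  assumes deg: "\<And>n. degree (P n) \<le> n"
    and approx: "\<And>n. norm_phi \<phi> (zpderiv (P n) - smult (of_nat n) (P n)) \<le> M * norm_phi \<phi> (P n)"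
  shows "\<exists>K. \<forall>n\<ge>1. norm_phi \<phi> (monom 1 j * (pderiv ^^ j) (P n)
              - smult (complex_of_real (\<Prod>i<j. real n - real i)) (P n)) * real n
            \<le> K * real n ^ j * norm_phi \<phi> (P n)"
proof (induction j)
  case 0
  show ?case by (auto intro: exI[of _ 0])
next
  case (Suc j)
  then obtain K where K: "\<And>n. n \<ge> 1 \<Longrightarrow> norm_phi \<phi> (monom 1 j * (pderiv ^^ j) (P n)
      - smult (complex_of_real (\<Prod>i<j. real n - real i)) (P n)) * real n \<le> K * real n ^ j * norm_phi \<phi> (P n)"
    by blast
  obtain B where "B > 0" and B: "\<And>f N. degree f \<le> N \<Longrightarrow> norm_phi \<phi> (zpderiv f) \<le> B * real N * norm_phi \<phi> f"
    using norm_phi_zpderiv_le by blast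
  show ?case
    using norm_phi_monom_mult_higher_pderiv_diff_Suc_le[OF B _ _ deg approx K] \<open>B > 0\<close> by force
qed

lemma tendsto_norm_higher_pderiv_div_norm:
  assumes deg: "\<And>n. degree (P n) \<le> n" and nonzero: "\<And>n. P n \<noteq> 0"
    and approx: "\<And>n. norm_phi \<phi> (zpderiv (P n) - smult (of_nat n) (P n)) \<le> M * norm_phi \<phi> (P n)"
  shows "(\<lambda>n. (1 / real n ^ p) * (norm_phi \<phi> ((pderiv ^^ p) (P n)) / norm_phi \<phi> (P n))) \<longlonglongrightarrow> 1"
proof -
  define c where "c n = (\<Prod>i<p. real n - real i)" for n
  obtain K where K: "\<And>n. n \<ge> 1 \<Longrightarrow> norm_phi \<phi> (monom 1 p * (pderiv ^^ p) (P n)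
      - smult (complex_of_real (c n)) (P n)) * real n \<le> K * real n ^ p * norm_phi \<phi> (P n)"
    using norm_phi_monom_mult_higher_pderiv_diff_le[OF deg approx, of p] by (auto simp: c_def)
  have "\<bar>(1 / real n ^ p) * (norm_phi \<phi> ((pderiv ^^ p) (P n)) / norm_phi \<phi> (P n)) - \<bar>c n\<bar> / real n ^ p\<bar>
      \<le> K / real n" if "n \<ge> 1" for n
  proof -
    define A where "A = norm_phi \<phi> ((pderiv ^^ p) (P n))"
    define N where "N = norm_phi \<phi> (P n)"
    have "N > 0" "real n > 0"
      using norm_phi_pos[OF nonzero[of n]] that by (auto simp: N_def)
    have "\<bar>A - \<bar>c n\<bar> * N\<bar> \<le> norm_phi \<phi> (monom 1 p * (pderiv ^^ p) (P n) - smult (complex_of_real (c n)) (P n))"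
      using norm_phi_diff_ge[of "monom 1 p * (pderiv ^^ p) (P n)" "smult (complex_of_real (c n)) (P n)"]
      by (simp add: A_def N_def norm_phi_monom_mult norm_phi_smult)
    then have "\<bar>A - \<bar>c n\<bar> * N\<bar> * real n \<le> K * real n ^ p * N"
      using K[OF that] by (simp add: N_def) (meson mult_right_mono of_nat_0_le_iff order_trans)
    then have "\<bar>A - \<bar>c n\<bar> * N\<bar> \<le> K / real n * (real n ^ p * N)"
      using \<open>real n > 0\<close> by (simp add: pos_le_divide_eq[symmetric])
    then have "\<bar>A - \<bar>c n\<bar> * N\<bar> / (real n ^ p * N) \<le> K / real n"
      using \<open>N > 0\<close> \<open>real n > 0\<close> by (intro mult_imp_div_pos_le) auto
    moreover have "(1 / real n ^ p) * (A / N) - \<bar>c n\<bar> / real n ^ p = (A - \<bar>c n\<bar> * N) / (real n ^ p * N)"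
      using \<open>N > 0\<close> \<open>real n > 0\<close> by (simp add: field_simps)
    ultimately show ?thesis
      using \<open>N > 0\<close> by (simp add: A_def N_def abs_divide abs_mult)
  qed
  then have "\<forall>\<^sub>F n in sequentially.
      norm ((1 / real n ^ p) * (norm_phi \<phi> ((pderiv ^^ p) (P n)) / norm_phi \<phi> (P n)) - \<bar>c n\<bar> / real n ^ p)
        \<le> K / real n"
    by (auto intro: eventually_sequentiallyI[of 1])
  moreover have "(\<lambda>n. K / real n) \<longlonglongrightarrow> 0"
    by (intro tendsto_divide_0[OF tendsto_const] filterlim_at_top_imp_at_infinity[OF filterlim_real_sequentially])
  ultimately have "(\<lambda>n. (1 / real n ^ p) * (norm_phi \<phi> ((pderiv ^^ p) (P n)) / norm_phi \<phi> (P n))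
      - \<bar>c n\<bar> / real n ^ p) \<longlonglongrightarrow> 0"
    by (rule Lim_null_comparison)
  from tendsto_add[OF this tendsto_abs_prod_diff_div_power[of p]] show ?thesis
    by (simp add: c_def)
qed

end

lemma (in smooth_potential) tendsto_norm_higher_pderiv_OPUC:
  "(\<lambda>n. (1 / real n ^ p) *
      (norm_phi (\<lambda>\<theta>. exp (- V \<theta>)) ((pderiv ^^ p) (OPUC (\<lambda>\<theta>. exp (- V \<theta>)) n))
       / norm_phi (\<lambda>\<theta>. exp (- V \<theta>)) (OPUC (\<lambda>\<theta>. exp (- V \<theta>)) n))) \<longlonglongrightarrow> 1"
proof -
  obtain M where "\<And>\<theta>. \<theta> \<in> {-pi..pi} \<Longrightarrow> \<bar>V' \<theta>\<bar> \<le> M"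
    using compact_imp_bounded[OF compact_continuous_image[OF continuous_potential_deriv compact_Icc]]
    by (force simp: bounded_real)
  then show ?thesis
    using degree_OPUC OPUC_nonzero norm_phi_zpderiv_OPUC_diff_le
    by (intro tendsto_norm_higher_pderiv_div_norm[where M = M]) auto
qed

lemma C_lip_periodic_continuous:
  assumes "C_lip_periodic k V"
  shows "continuous_on UNIV V"
proof -
  obtain D L where D0: "D 0 = V"
    and D: "\<forall>j < k - 1. \<forall>x. (D j has_real_derivative D (Suc j) x) (at x)"
    and L: "\<And>x y. \<bar>D (k - 1) x - D (k - 1) y\<bar> \<le> L * \<bar>x - y\<bar>"
    using assms unfolding C_lip_periodic_def by blast
  show ?thesis
  proof (cases "k - 1 = 0")
    case True
    have "\<bar>V x - V y\<bar> \<le> \<bar>L\<bar> * \<bar>x - y\<bar>" for x y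
      using L[of x y] True D0 mult_right_mono[OF abs_ge_self abs_ge_zero, of L "x - y"] by auto
    then have "lipschitz_on \<bar>L\<bar> UNIV V"
      by (auto simp: lipschitz_on_def dist_real_def)
    then show ?thesis
      by (rule lipschitz_on_continuous_on)
  next
    case False
    then have "\<And>x. (V has_real_derivative D 1 x) (at x)"
      using D D0 by auto
    then show ?thesis
      by (meson DERIV_isCont continuous_at_imp_continuous_on)
  qed
qed

lemma C_lip_periodic_smooth_potential:
  assumes "C_lip_periodic k V" "k \<ge> 3"
  obtains V' where "smooth_potential V V'"
proof -
  obtain D where D0: "D 0 = V"
    and D: "\<forall>j < k - 1. \<forall>x. (D j has_real_derivative D (Suc j) x) (at x)"
    and periodic: "\<forall>\<theta>. V (\<theta> + 2 * pi) = V \<theta>"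
    using assms(1) unfolding C_lip_periodic_def by blast
  have "(V has_real_derivative D 1 x) (at x)" "(D 1 has_real_derivative D 2 x) (at x)" for x
    using D D0 assms(2) by (auto simp: numeral_2_eq_2)
  then have "smooth_potential V (D 1)"
    using periodic[rule_format, of "- pi"]
    by unfold_locales (auto intro: continuous_at_imp_continuous_on DERIV_isCont)
  then show ?thesis ..
qed

theorem corollary3p3:
  fixes p k :: nat and V :: "real \<Rightarrow> real"
  assumes "C_lip_periodic k V"
    and "k \<ge> 2 * p + 1"
  shows "(\<lambda>n. (1 / real n ^ p) *
            (norm_phi (\<lambda>\<theta>. exp (- V \<theta>)) ((pderiv ^^ p) (OPUC (\<lambda>\<theta>. exp (- V \<theta>)) n))
             / norm_phi (\<lambda>\<theta>. exp (- V \<theta>)) (OPUC (\<lambda>\<theta>. exp (- V \<theta>)) n)))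
         \<longlonglongrightarrow> 1"
proof (cases "p = 0")
  case True
  interpret positive_circle_weight "\<lambda>\<theta>. exp (- V \<theta>)"
    using C_lip_periodic_continuous[OF assms(1)]
    by unfold_locales (auto intro!: continuous_intros intro: continuous_on_subset)
  have "norm_phi (\<lambda>\<theta>. exp (- V \<theta>)) (OPUC (\<lambda>\<theta>. exp (- V \<theta>)) n) \<noteq> 0" for n
    using norm_phi_pos[OF OPUC_nonzero] by (metis less_irrefl)
  then show ?thesis
    using True by simp
next
  case False
  then obtain V' where "smooth_potential V V'"
    using C_lip_periodic_smooth_potential[OF assms(1)] assms(2) by force
  then show ?thesis
    by (rule smooth_potential.tendsto_norm_higher_pderiv_OPUC)
qed

end
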